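(* For a semiring $(S,+,\cdot)$ the following are equivalent: (i) $S$ is a quasi completely regular semiring and $E^+(S)$ is a subsemigroup of $(S,+)$; (ii) $S$ is additively quasi regular, $b^2\,\mathscr{H}^{*^{+}}\,b$ for all $b\in S$, for all $a,x\in S$ $a=a+x+a$ implies $a=a+2x+2a$, and $Reg^+S$ is a subsemigroup of $(S,+)$; (iii) $S$ is a b-lattice of nil-extensions of rectangular skew-rings and $E^+(S)$ is a subsemigroup of $(S,+)$.
   Context: A semiring $(S,+,\cdot)$ has two associative operations with $a(b+c)=ab+ac$, $(b+c)a=ba+ca$. $na$ is the $n$-fold sum of $a$; $b^2=b\cdot b$. $E^+(S)$ is the set of additive idempotents; $Reg^+S$ is the set of additively regular elements, where $a$ is additively regular if $a=a+x+a$ for some $x\in S$. $S$ is additively quasi regular if for each $a$ some $na$ is additively regular. $a$ is completely regular if there is $x$ with $a=a+x+a$, $a+x=x+a$, $a(a+x)=a+x$; $S$ is quasi completely regular if for each $a$ some $na$ is completely regular. Green's relations of $(S,+)$: $\mathscr{L}^+,\mathscr{R}^+,\mathscr{J}^+$. For additively quasi regular $S$, $m(a)$ is the least positive integer with $m(a)a$ additively regular; $a\,\mathscr{L}^{*^{+}}\,b$ iff $m(a)a\,\mathscr{L}^+\,m(b)b$, $a\,\mathscr{R}^{*^{+}}\,b$ iff $m(a)a\,\mathscr{R}^+\,m(b)b$, $\mathscr{H}^{*^{+}}=\mathscr{L}^{*^{+}}\cap\mathscr{R}^{*^{+}}$. A completely simple semiring: all elements completely regular and $\mathscr{J}^+=S\times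 S$. A rectangular skew-ring: completely simple semiring $K$ with $E^+(K)$ a subsemigroup of $(K,+)$. $S$ is a nil-extension of a subsemiring $K$ if $K$ is a bi-ideal ($a\in K,x\in S\Rightarrow a+x,x+a,ax,xa\in K$) and every $a\in S$ has some $na\in K$. A b-lattice is a semiring with $(S,\cdot)$ a band and $(S,+)$ a semilattice; $S$ is a b-lattice of semirings of a class if there is a congruence $\rho$ with $S/\rho$ a b-lattice and each $\rho$-class a subsemiring in that class. *)

theory Defs
  imports Main
begin

text \<open>A semiring is given by a carrier S with two binary operations p (addition)
 and m (multiplication); no zero, no identity, addition not assumed commutative.
 All notions are relative to a carrier set so that they apply to subsemirings.\<close>

definition sr_semiring :: "'a set \<Rightarrow> ('a \<Rightarrow> 'a \<Rightarrow> 'a) \<Rightarrow> ('a \<Rightarrow> 'a \<Rightarrow> 'a) \<Rightarrow> bool" where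
  "sr_semiring S p m \<longleftrightarrow>
     (\<forall>a\<in>S. \<forall>b\<in>S. p a b \<in> S \<and> m a b \<in> S) \<and>
     (\<forall>a\<in>S. \<forall>b\<in>S. \<forall>c\<in>S. p (p a b) c = p a (p b c) \<and> m (m a b) c = m a (m b c) \<and>
        m a (p b c) = p (m a b) (m a c) \<and> m (p b c) a = p (m b a) (m c a))"

text \<open>n-fold sum n a, meaningful for n \<ge> 1.\<close>
fun nsum :: "('a \<Rightarrow> 'a \<Rightarrow> 'a) \<Rightarrow> nat \<Rightarrow> 'a \<Rightarrow> 'a" where
  "nsum p 0 a = a"
| "nsum p (Suc 0) a = a"
| "nsum p (Suc (Suc n)) a = p (nsum p (Suc n) a) a"

definition add_idem :: "'a set \<Rightarrow> ('a \<Rightarrow> 'a \<Rightarrow> 'a) \<Rightarrow> 'a set" where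
  "add_idem S p = {e\<in>S. p e e = e}"

definition add_regular :: "'a set \<Rightarrow> ('a \<Rightarrow> 'a \<Rightarrow> 'a) \<Rightarrow> 'a \<Rightarrow> bool" where
  "add_regular S p a \<longleftrightarrow> (\<exists>x\<in>S. a = p (p a x) a)"

definition Reg_add :: "'a set \<Rightarrow> ('a \<Rightarrow> 'a \<Rightarrow> 'a) \<Rightarrow> 'a set" where
  "Reg_add S p = {a\<in>S. add_regular S p a}"

definition subsemigroup :: "'a set \<Rightarrow> ('a \<Rightarrow> 'a \<Rightarrow> 'a) \<Rightarrow> bool" where
  "subsemigroup T p \<longleftrightarrow> (\<forall>a\<in>T. \<forall>b\<in>T. p a b \<in> T)"

definition add_quasi_regular :: "'a set \<Rightarrow> ('a \<Rightarrow> 'a \<Rightarrow> 'a) \<Rightarrow> bool" where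
  "add_quasi_regular S p \<longleftrightarrow> (\<forall>a\<in>S. \<exists>n>0. add_regular S p (nsum p n a))"

definition completely_regular :: "'a set \<Rightarrow> ('a \<Rightarrow> 'a \<Rightarrow> 'a) \<Rightarrow> ('a \<Rightarrow> 'a \<Rightarrow> 'a) \<Rightarrow> 'a \<Rightarrow> bool" where
  "completely_regular S p m a \<longleftrightarrow>
     (\<exists>x\<in>S. a = p (p a x) a \<and> p a x = p x a \<and> m a (p a x) = p a x)"

definition quasi_completely_regular :: "'a set \<Rightarrow> ('a \<Rightarrow> 'a \<Rightarrow> 'a) \<Rightarrow> ('a \<Rightarrow> 'a \<Rightarrow> 'a) \<Rightarrow> bool" where
  "quasi_completely_regular S p m \<longleftrightarrow>
     (\<forall>a\<in>S. \<exists>n>0. completely_regular S p m (nsum p n a))"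

definition mindex :: "'a set \<Rightarrow> ('a \<Rightarrow> 'a \<Rightarrow> 'a) \<Rightarrow> 'a \<Rightarrow> nat" where
  "mindex S p a = (LEAST n. 0 < n \<and> add_regular S p (nsum p n a))"

text \<open>Green's relations of the semigroup (S,+) (via S^1).\<close>
definition greenL :: "'a set \<Rightarrow> ('a \<Rightarrow> 'a \<Rightarrow> 'a) \<Rightarrow> 'a \<Rightarrow> 'a \<Rightarrow> bool" where
  "greenL S p a b \<longleftrightarrow> a \<in> S \<and> b \<in> S \<and>
     (a = b \<or> (\<exists>x\<in>S. a = p x b)) \<and> (b = a \<or> (\<exists>y\<in>S. b = p y a))"

definition greenR :: "'a set \<Rightarrow> ('a \<Rightarrow> 'a \<Rightarrow> 'a) \<Rightarrow> 'a \<Rightarrow> 'a \<Rightarrow> bool" where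
  "greenR S p a b \<longleftrightarrow> a \<in> S \<and> b \<in> S \<and>
     (a = b \<or> (\<exists>x\<in>S. a = p b x)) \<and> (b = a \<or> (\<exists>y\<in>S. b = p a y))"

definition ideal_principal :: "'a set \<Rightarrow> ('a \<Rightarrow> 'a \<Rightarrow> 'a) \<Rightarrow> 'a \<Rightarrow> 'a set" where
  "ideal_principal S p b = {b} \<union> {p x b |x. x\<in>S} \<union> {p b y |y. y\<in>S} \<union> {p (p x b) y |x y. x\<in>S \<and> y\<in>S}"

definition greenJ :: "'a set \<Rightarrow> ('a \<Rightarrow> 'a \<Rightarrow> 'a) \<Rightarrow> 'a \<Rightarrow> 'a \<Rightarrow> bool" where
  "greenJ S p a b \<longleftrightarrow> a \<in> S \<and> b \<in> S \<and> ideal_principal S p a = ideal_principal S p b"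

definition Lstar :: "'a set \<Rightarrow> ('a \<Rightarrow> 'a \<Rightarrow> 'a) \<Rightarrow> 'a \<Rightarrow> 'a \<Rightarrow> bool" where
  "Lstar S p a b \<longleftrightarrow> greenL S p (nsum p (mindex S p a) a) (nsum p (mindex S p b) b)"

definition Rstar :: "'a set \<Rightarrow> ('a \<Rightarrow> 'a \<Rightarrow> 'a) \<Rightarrow> 'a \<Rightarrow> 'a \<Rightarrow> bool" where
  "Rstar S p a b \<longleftrightarrow> greenR S p (nsum p (mindex S p a) a) (nsum p (mindex S p b) b)"

definition Hstar :: "'a set \<Rightarrow> ('a \<Rightarrow> 'a \<Rightarrow> 'a) \<Rightarrow> 'a \<Rightarrow> 'a \<Rightarrow> bool" where
  "Hstar S p a b \<longleftrightarrow> Lstar S p a b \<and> Rstar S p a b"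

definition completely_simple :: "'a set \<Rightarrow> ('a \<Rightarrow> 'a \<Rightarrow> 'a) \<Rightarrow> ('a \<Rightarrow> 'a \<Rightarrow> 'a) \<Rightarrow> bool" where
  "completely_simple K p m \<longleftrightarrow> sr_semiring K p m \<and>
     (\<forall>a\<in>K. completely_regular K p m a) \<and> (\<forall>a\<in>K. \<forall>b\<in>K. greenJ K p a b)"

definition rect_skew_ring :: "'a set \<Rightarrow> ('a \<Rightarrow> 'a \<Rightarrow> 'a) \<Rightarrow> ('a \<Rightarrow> 'a \<Rightarrow> 'a) \<Rightarrow> bool" where
  "rect_skew_ring K p m \<longleftrightarrow> completely_simple K p m \<and> subsemigroup (add_idem K p) p"

definition bi_ideal :: "'a set \<Rightarrow> 'a set \<Rightarrow> ('a \<Rightarrow> 'a \<Rightarrow> 'a) \<Rightarrow> ('a \<Rightarrow> 'a \<Rightarrow> 'a) \<Rightarrow> bool" where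
  "bi_ideal S K p m \<longleftrightarrow> K \<subseteq> S \<and>
     (\<forall>a\<in>K. \<forall>x\<in>S. p a x \<in> K \<and> p x a \<in> K \<and> m a x \<in> K \<and> m x a \<in> K)"

definition nil_extension :: "'a set \<Rightarrow> 'a set \<Rightarrow> ('a \<Rightarrow> 'a \<Rightarrow> 'a) \<Rightarrow> ('a \<Rightarrow> 'a \<Rightarrow> 'a) \<Rightarrow> bool" where
  "nil_extension S K p m \<longleftrightarrow> sr_semiring K p m \<and> bi_ideal S K p m \<and>
     (\<forall>a\<in>S. \<exists>n>0. nsum p n a \<in> K)"

definition nil_ext_rect_skew_ring :: "'a set \<Rightarrow> ('a \<Rightarrow> 'a \<Rightarrow> 'a) \<Rightarrow> ('a \<Rightarrow> 'a \<Rightarrow> 'a) \<Rightarrow> bool" where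
  "nil_ext_rect_skew_ring S p m \<longleftrightarrow> sr_semiring S p m \<and>
     (\<exists>K. rect_skew_ring K p m \<and> nil_extension S K p m)"

definition sr_congruence :: "'a set \<Rightarrow> ('a \<Rightarrow> 'a \<Rightarrow> 'a) \<Rightarrow> ('a \<Rightarrow> 'a \<Rightarrow> 'a) \<Rightarrow> 'a rel \<Rightarrow> bool" where
  "sr_congruence S p m \<rho> \<longleftrightarrow> equiv S \<rho> \<and>
     (\<forall>a b c. (a, b) \<in> \<rho> \<and> c \<in> S \<longrightarrow>
        (p a c, p b c) \<in> \<rho> \<and> (p c a, p c b) \<in> \<rho> \<and> (m a c, m b c) \<in> \<rho> \<and> (m c a, m c b) \<in> \<rho>)"

text \<open>S/rho is a b-lattice: (S/rho, .) a band and (S/rho, +) a semilattice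
 (associativity is inherited from S).\<close>
definition blattice_quotient :: "'a set \<Rightarrow> ('a \<Rightarrow> 'a \<Rightarrow> 'a) \<Rightarrow> ('a \<Rightarrow> 'a \<Rightarrow> 'a) \<Rightarrow> 'a rel \<Rightarrow> bool" where
  "blattice_quotient S p m \<rho> \<longleftrightarrow>
     (\<forall>a\<in>S. (m a a, a) \<in> \<rho> \<and> (p a a, a) \<in> \<rho>) \<and>
     (\<forall>a\<in>S. \<forall>b\<in>S. (p a b, p b a) \<in> \<rho>)"

definition blattice_of_nil_ext_rsr :: "'a set \<Rightarrow> ('a \<Rightarrow> 'a \<Rightarrow> 'a) \<Rightarrow> ('a \<Rightarrow> 'a \<Rightarrow> 'a) \<Rightarrow> bool" where
  "blattice_of_nil_ext_rsr S p m \<longleftrightarrow>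
     (\<exists>\<rho>. sr_congruence S p m \<rho> \<and> blattice_quotient S p m \<rho> \<and>
        (\<forall>a\<in>S. nil_ext_rect_skew_ring (\<rho> `` {a}) p m))"

end

theory Submission
  imports Defs
begin

text \<open>Under (i) every element a has a distinguished additive idempotent a^0: the identity of the
  H-class of (S,+) containing a completely regular multiple n a. It is determined by the equations
  s a = s a^0 and a s = a^0 s for all additive idempotents s, so a \<mapsto> a^0 is a semiring
  homomorphism onto the band E^+(S), and a is additively regular iff a + a^0 = a = a^0 + a.
  From this, (ii) is a computation inside H-classes, and (iii) is obtained by pulling back Green's
  relation D of the band E^+(S) along a \<mapsto> a^0: the regular elements of each class form a
  rectangular skew-ring which is a bi-ideal of the class absorbing a multiple of each element.
  Conversely, under (ii) the double law makes y = u + 3x + u an inverse of a regular u (with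
  inverse x) that commutes with u, and u^2 H u forces u (u + y) = u + y, so every regular element
  is completely regular; under (iii) some n a lies in a rectangular skew-ring.\<close>

section \<open>Green's relation D on a band\<close>

locale band_on =
  fixes E :: "'a set" and add :: "'a \<Rightarrow> 'a \<Rightarrow> 'a" (infixl "\<cdot>" 65)
  assumes assoc: "\<lbrakk>x \<in> E; y \<in> E; z \<in> E\<rbrakk> \<Longrightarrow> x \<cdot> y \<cdot> z = x \<cdot> (y \<cdot> z)"
    and closed: "\<lbrakk>x \<in> E; y \<in> E\<rbrakk> \<Longrightarrow> x \<cdot> y \<in> E"
    and idem: "x \<in> E \<Longrightarrow> x \<cdot> x = x"
begin

definition bandD :: "'a \<Rightarrow> 'a \<Rightarrow> bool" where
  "bandD e f \<longleftrightarrow> e \<cdot> f \<cdot> e = e \<and> f \<cdot> e \<cdot> f = f"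

lemma bandD_sym: "bandD e f \<Longrightarrow> bandD f e"
  unfolding bandD_def by simp

lemma bandD_refl: "e \<in> E \<Longrightarrow> bandD e e"
  unfolding bandD_def by (simp add: idem)

lemma bandD_trans:
  assumes "e \<in> E" "f \<in> E" "g \<in> E" "bandD e f" "bandD f g" shows "bandD e g"
  using assms unfolding bandD_def by (smt (verit) assoc closed idem)

lemma bandD_add_right:
  assumes "e \<in> E" "f \<in> E" "c \<in> E" "bandD e f" shows "bandD (e \<cdot> c) (f \<cdot> c)"
  using assms unfolding bandD_def by (smt (verit) assoc closed idem)

lemma bandD_add_left:
  assumes "e \<in> E" "f \<in> E" "c \<in> E" "bandD e f" shows "bandD (c \<cdot> e) (c \<cdot> f)"
  using assms unfolding bandD_def by (smt (verit) assoc closed idem)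

lemma bandD_add_commute: "\<lbrakk>e \<in> E; f \<in> E\<rbrakk> \<Longrightarrow> bandD (e \<cdot> f) (f \<cdot> e)"
  unfolding bandD_def by (metis assoc closed idem)

lemma bandD_add:
  assumes "e \<in> E" "f \<in> E" "g \<in> E" "bandD e g" "bandD f g" shows "bandD (e \<cdot> f) g"
  using assms unfolding bandD_def by (smt (verit) assoc closed idem)

end

lemma mindex_add_regular:
  assumes "add_quasi_regular S p" "b \<in> S"
  shows "0 < mindex S p b \<and> add_regular S p (nsum p (mindex S p b) b)"
proof -
  obtain n where "n > 0" "add_regular S p (nsum p n b)"
    using assms unfolding add_quasi_regular_def by blast
  then show ?thesis unfolding mindex_def by (metis (mono_tags, lifting) LeastI)
qed

lemma mindex_eq_1: "add_regular S p b \<Longrightarrow> mindex S p b = 1"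
  unfolding mindex_def by (rule Least_equality) auto

lemma quasi_completely_regular_add_quasi_regular:
  "quasi_completely_regular S p m \<Longrightarrow> add_quasi_regular S p"
  unfolding quasi_completely_regular_def add_quasi_regular_def completely_regular_def
    add_regular_def by blast

locale carrier_semiring =
  fixes S :: "'a set" and p :: "'a \<Rightarrow> 'a \<Rightarrow> 'a" (infixl "\<oplus>" 65)
    and m :: "'a \<Rightarrow> 'a \<Rightarrow> 'a" (infixl "\<otimes>" 70)
  assumes semiring: "sr_semiring S p m"
begin

lemma a_closed [simp]: "\<lbrakk>a \<in> S; b \<in> S\<rbrakk> \<Longrightarrow> a \<oplus> b \<in> S"
  and m_closed [simp]: "\<lbrakk>a \<in> S; b \<in> S\<rbrakk> \<Longrightarrow> a \<otimes> b \<in> S"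
  and a_assoc: "\<lbrakk>a \<in> S; b \<in> S; c \<in> S\<rbrakk> \<Longrightarrow> a \<oplus> b \<oplus> c = a \<oplus> (b \<oplus> c)"
  and m_assoc: "\<lbrakk>a \<in> S; b \<in> S; c \<in> S\<rbrakk> \<Longrightarrow> a \<otimes> b \<otimes> c = a \<otimes> (b \<otimes> c)"
  and l_distr: "\<lbrakk>a \<in> S; b \<in> S; c \<in> S\<rbrakk> \<Longrightarrow> a \<otimes> (b \<oplus> c) = a \<otimes> b \<oplus> a \<otimes> c"
  and r_distr: "\<lbrakk>a \<in> S; b \<in> S; c \<in> S\<rbrakk> \<Longrightarrow> (b \<oplus> c) \<otimes> a = b \<otimes> a \<oplus> c \<otimes> a"
  using semiring unfolding sr_semiring_def by blast+

lemma sr_semiring_subset: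
  assumes "T \<subseteq> S" and "\<And>a b. \<lbrakk>a \<in> T; b \<in> T\<rbrakk> \<Longrightarrow> a \<oplus> b \<in> T \<and> a \<otimes> b \<in> T"
  shows "sr_semiring T p m"
  using assms a_assoc m_assoc l_distr r_distr unfolding sr_semiring_def by (meson subsetD)

lemma add_regular_iff: "add_regular S p a \<longleftrightarrow> (\<exists>x\<in>S. a \<oplus> x \<oplus> a = a)"
  unfolding add_regular_def by metis

lemma mem_add_idem: "e \<in> add_idem S p \<longleftrightarrow> e \<in> S \<and> e \<oplus> e = e"
  unfolding add_idem_def by simp

lemma add_idem_absorb: "\<lbrakk>g \<in> S; y \<in> S; g \<oplus> g = g\<rbrakk> \<Longrightarrow> g \<oplus> (g \<oplus> y) = g \<oplus> y"
  by (metis a_assoc)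

lemma add_idem_mult_left: "\<lbrakk>s \<in> S; a \<in> S; s \<oplus> s = s\<rbrakk> \<Longrightarrow> s \<otimes> a \<oplus> s \<otimes> a = s \<otimes> a"
  by (metis r_distr)

lemma add_idem_mult_right: "\<lbrakk>s \<in> S; a \<in> S; s \<oplus> s = s\<rbrakk> \<Longrightarrow> a \<otimes> s \<oplus> a \<otimes> s = a \<otimes> s"
  by (metis l_distr)

lemma nsum_Suc: "nsum p (Suc n) a = (if n = 0 then a else nsum p n a \<oplus> a)"
  by (cases n) auto

lemma nsum_Suc_pos: "0 < n \<Longrightarrow> nsum p (Suc n) a = nsum p n a \<oplus> a"
  by (cases n) auto

lemma nsum_2: "nsum p 2 a = a \<oplus> a"
  by (simp add: numeral_2_eq_2)

lemma nsum_closed [simp]: "a \<in> S \<Longrightarrow> nsum p n a \<in> S"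
  by (induction n) (auto simp: nsum_Suc)

lemma nsum_commute: "a \<in> S \<Longrightarrow> a \<oplus> nsum p n a = nsum p n a \<oplus> a"
proof (induction n)
  case (Suc n)
  then show ?case by (cases "n = 0") (simp_all add: nsum_Suc_pos a_assoc[symmetric])
qed simp

lemma nsum_add_idem: "a \<oplus> a = a \<Longrightarrow> nsum p n a = a"
  by (induction n) (auto simp: nsum_Suc)

lemma mult_nsum: "\<lbrakk>s \<in> S; a \<in> S\<rbrakk> \<Longrightarrow> s \<otimes> nsum p n a = nsum p n (s \<otimes> a)"
  by (induction n) (auto simp: nsum_Suc l_distr)

lemma nsum_mult: "\<lbrakk>s \<in> S; a \<in> S\<rbrakk> \<Longrightarrow> nsum p n a \<otimes> s = nsum p n (a \<otimes> s)"
  by (induction n) (auto simp: nsum_Suc r_distr)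

lemma nsum_add_factors:
  assumes a: "a \<in> S" and x: "x \<in> S" "nsum p n a \<oplus> x = x \<oplus> nsum p n a"
  shows "\<exists>t\<in>S. nsum p n a \<oplus> x = a \<oplus> t" "\<exists>t\<in>S. nsum p n a \<oplus> x = t \<oplus> a"
proof -
  have "nsum p n a = a \<or> (\<exists>k. nsum p n a = nsum p k a \<oplus> a \<and> nsum p n a = a \<oplus> nsum p k a)"
  proof (cases n)
    case (Suc k)
    then show ?thesis using nsum_commute[OF a, of k] by (cases "k = 0") (auto simp: nsum_Suc_pos)
  qed simp
  then have "(\<exists>t\<in>S. nsum p n a \<oplus> x = a \<oplus> t) \<and> (\<exists>t\<in>S. nsum p n a \<oplus> x = t \<oplus> a)"
  proof
    assume "nsum p n a = a"
    then have "nsum p n a \<oplus> x = a \<oplus> x" "nsum p n a \<oplus> x = x \<oplus> a" using x(2) by simp_all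
    then show ?thesis using x(1) by blast
  next
    assume "\<exists>k. nsum p n a = nsum p k a \<oplus> a \<and> nsum p n a = a \<oplus> nsum p k a"
    then obtain k where k: "nsum p n a = nsum p k a \<oplus> a" "nsum p n a = a \<oplus> nsum p k a" by blast
    have "nsum p n a \<oplus> x = a \<oplus> (nsum p k a \<oplus> x)" using a x(1) by (simp add: k(2) a_assoc)
    moreover have "nsum p n a \<oplus> x = x \<oplus> (nsum p k a \<oplus> a)" using x(2) by (simp only: k(1))
    ultimately show ?thesis using a x(1) by (metis a_assoc a_closed nsum_closed)
  qed
  then show "\<exists>t\<in>S. nsum p n a \<oplus> x = a \<oplus> t" "\<exists>t\<in>S. nsum p n a \<oplus> x = t \<oplus> a" by blast+
qed

lemma add_inverse_pair:
  assumes a: "a \<in> S" "x \<in> S" "a \<oplus> x \<oplus> a = a"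
  shows "a \<oplus> (x \<oplus> a \<oplus> x) \<oplus> a = a" "(x \<oplus> a \<oplus> x) \<oplus> a \<oplus> (x \<oplus> a \<oplus> x) = x \<oplus> a \<oplus> x"
proof -
  have r: "a \<oplus> (x \<oplus> (a \<oplus> y)) = a \<oplus> y" if "y \<in> S" for y
    using a that by (simp add: a_assoc[symmetric])
  show "a \<oplus> (x \<oplus> a \<oplus> x) \<oplus> a = a" "(x \<oplus> a \<oplus> x) \<oplus> a \<oplus> (x \<oplus> a \<oplus> x) = x \<oplus> a \<oplus> x"
    using a r by (simp_all add: a_assoc)
qed

lemma add_inverse_add_idem:
  assumes "a \<in> S" "x \<in> S" "a \<oplus> x \<oplus> a = a"
  shows "(a \<oplus> x) \<oplus> (a \<oplus> x) = a \<oplus> x" "(x \<oplus> a) \<oplus> (x \<oplus> a) = x \<oplus> a"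
proof -
  have "(a \<oplus> x) \<oplus> (a \<oplus> x) = (a \<oplus> x \<oplus> a) \<oplus> x" "(x \<oplus> a) \<oplus> (x \<oplus> a) = x \<oplus> (a \<oplus> x \<oplus> a)"
    using assms(1,2) by (simp_all add: a_assoc)
  then show "(a \<oplus> x) \<oplus> (a \<oplus> x) = a \<oplus> x" "(x \<oplus> a) \<oplus> (x \<oplus> a) = x \<oplus> a"
    using assms(3) by simp_all
qed

lemma add_regular_mult:
  assumes b: "b \<in> S" "add_regular S p b" and x: "x \<in> S"
  shows "add_regular S p (b \<otimes> x)" "add_regular S p (x \<otimes> b)"
proof -
  obtain y where y: "y \<in> S" "b \<oplus> y \<oplus> b = b" using b unfolding add_regular_iff by blast
  have "b \<otimes> x \<oplus> y \<otimes> x \<oplus> b \<otimes> x = b \<otimes> x" "x \<otimes> b \<oplus> x \<otimes> y \<oplus> x \<otimes> b = x \<otimes> b"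
    using y b(1) x r_distr l_distr by (metis a_closed)+
  then show "add_regular S p (b \<otimes> x)" "add_regular S p (x \<otimes> b)"
    unfolding add_regular_iff using y(1) x by (metis m_closed)+
qed

lemma mult_eq_mult_unit_left:
  assumes s: "s \<in> S" "s \<oplus> s = s" and ux: "u \<in> S" "x \<in> S" "u \<oplus> (u \<oplus> x) = u"
  shows "s \<otimes> u = s \<otimes> (u \<oplus> x)"
proof -
  have "s \<otimes> u = s \<otimes> (u \<oplus> (u \<oplus> x))" using ux(3) by simp
  also have "\<dots> = (s \<otimes> u \<oplus> s \<otimes> u) \<oplus> s \<otimes> x" using s ux(1,2) by (simp add: l_distr a_assoc)
  also have "\<dots> = s \<otimes> (u \<oplus> x)" using s ux by (simp add: l_distr add_idem_mult_left)
  finally show ?thesis .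
qed

lemma mult_eq_mult_unit_right:
  assumes s: "s \<in> S" "s \<oplus> s = s" and ux: "u \<in> S" "x \<in> S" "x \<oplus> u \<oplus> u = u"
  shows "u \<otimes> s = (x \<oplus> u) \<otimes> s"
proof -
  have "u \<otimes> s = (x \<oplus> u \<oplus> u) \<otimes> s" using ux(3) by simp
  also have "\<dots> = x \<otimes> s \<oplus> (u \<otimes> s \<oplus> u \<otimes> s)" using s ux(1,2) by (simp add: r_distr a_assoc)
  also have "\<dots> = (x \<oplus> u) \<otimes> s" using s ux by (simp add: r_distr add_idem_mult_right)
  finally show ?thesis .
qed

lemma greenL_greenR_common_unit:
  assumes u: "u \<in> S" and v: "v \<in> S"
    and ug: "u \<oplus> g = u" "g \<oplus> u = u" and vg: "v \<oplus> g = v" "g \<oplus> v = v"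
    and t1: "t1 \<in> S" "g = u \<oplus> t1" and t2: "t2 \<in> S" "g = t2 \<oplus> u"
    and t3: "t3 \<in> S" "g = v \<oplus> t3" and t4: "t4 \<in> S" "g = t4 \<oplus> v"
  shows "greenL S p u v \<and> greenR S p u v"
proof -
  have "u = (u \<oplus> t4) \<oplus> v" using ug t4 u v a_assoc[of u t4 v] by simp
  moreover have "v = (v \<oplus> t2) \<oplus> u" using vg t2 u v a_assoc[of v t2 u] by simp
  moreover have "u = v \<oplus> (t3 \<oplus> u)" using ug t3 u v a_assoc[of v t3 u] by simp
  moreover have "v = u \<oplus> (t1 \<oplus> v)" using vg t1 u v a_assoc[of u t1 v] by simp
  ultimately show ?thesis unfolding greenL_def greenR_def using u v t1 t2 t3 t4 by auto
qed

end

section \<open>The idempotent a^0 of a quasi completely regular semiring\<close>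

locale qcr_semiring = carrier_semiring +
  assumes qcr: "quasi_completely_regular S p m"
    and add_idem_closed: "subsemigroup (add_idem S p) p"

sublocale qcr_semiring \<subseteq> add_band: band_on "add_idem S p" p
  using add_idem_closed by unfold_locales (auto simp: mem_add_idem subsemigroup_def a_assoc)

context qcr_semiring
begin

lemma add_idem_add: "\<lbrakk>e \<in> S; f \<in> S; e \<oplus> e = e; f \<oplus> f = f\<rbrakk> \<Longrightarrow> (e \<oplus> f) \<oplus> (e \<oplus> f) = e \<oplus> f"
  using add_band.closed[of e f] by (simp add: mem_add_idem)

lemma add_idem_mult_idem:
  assumes e: "e \<in> S" "e \<oplus> e = e" shows "e \<otimes> e = e"
proof -
  obtain x where x: "x \<in> S" "e = e \<oplus> x \<oplus> e" "e \<oplus> x = x \<oplus> e" "e \<otimes> (e \<oplus> x) = e \<oplus> x"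
    using qcr e nsum_add_idem[OF e(2)]
    unfolding quasi_completely_regular_def completely_regular_def by metis
  have "x \<oplus> e = x \<oplus> (e \<oplus> e)" using e by simp
  also have "\<dots> = e \<oplus> x \<oplus> e" using x(1,3) e(1) by (simp add: a_assoc[symmetric])
  also have "\<dots> = e" using x(2) by simp
  finally show ?thesis using x(3,4) by simp
qed

text \<open>idem_of a is the element a^0 of the paper: the identity of the H-class of (S,+) containing
  any completely regular multiple n a. The multiplicative characterisation makes it independent
  of n.\<close>
definition is_idem_of :: "'a \<Rightarrow> 'a \<Rightarrow> bool" where
  "is_idem_of a g \<longleftrightarrow> g \<in> S \<and> g \<oplus> g = g \<and>
     (\<forall>s. s \<in> S \<and> s \<oplus> s = s \<longrightarrow> s \<otimes> a = s \<otimes> g \<and> a \<otimes> s = g \<otimes> s)"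

definition idem_of :: "'a \<Rightarrow> 'a" where
  "idem_of a = (THE g. is_idem_of a g)"

lemma is_idem_of_exists:
  assumes a: "a \<in> S"
  obtains g where "is_idem_of a g" "\<exists>t\<in>S. g = a \<oplus> t" "\<exists>t\<in>S. g = t \<oplus> a"
proof -
  obtain k where "k > 0" "completely_regular S p m (nsum p k a)"
    using qcr a unfolding quasi_completely_regular_def by blast
  moreover define u where "u = nsum p k a"
  ultimately obtain x where x: "x \<in> S" "u \<oplus> x \<oplus> u = u" "u \<oplus> x = x \<oplus> u"
    unfolding completely_regular_def by metis
  define g where "g = u \<oplus> x"
  have u: "u \<in> S" using a u_def by simp
  have gS: "g \<in> S" using g_def u x by simp
  have "g \<oplus> g = (u \<oplus> x \<oplus> u) \<oplus> x" unfolding g_def using u x(1) by (simp add: a_assoc)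
  then have gg: "g \<oplus> g = g" using x(2) g_def by simp
  have ug: "u \<oplus> (u \<oplus> x) = u" using u x by (simp add: a_assoc[symmetric])
  have gu: "x \<oplus> u \<oplus> u = u" using x(2) unfolding x(3) .
  have "s \<otimes> a = s \<otimes> g \<and> a \<otimes> s = g \<otimes> s" if s: "s \<in> S" "s \<oplus> s = s" for s
  proof
    have "s \<otimes> a = s \<otimes> u"
      using s a unfolding u_def by (simp add: mult_nsum nsum_add_idem add_idem_mult_left)
    then show "s \<otimes> a = s \<otimes> g"
      using mult_eq_mult_unit_left[OF s u x(1) ug] g_def by simp
    have "a \<otimes> s = u \<otimes> s"
      using s a unfolding u_def by (simp add: nsum_mult nsum_add_idem add_idem_mult_right)
    then show "a \<otimes> s = g \<otimes> s"
      using mult_eq_mult_unit_right[OF s u x(1) gu] g_def x(3) by simp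
  qed
  then have "is_idem_of a g" unfolding is_idem_of_def using gS gg by blast
  then show ?thesis using that nsum_add_factors[OF a x(1)] x(3) unfolding g_def u_def by blast
qed

lemma is_idem_of_unique:
  assumes g: "is_idem_of a g" and h: "is_idem_of a h" shows "g = h"
proof -
  have gh: "g \<in> S" "g \<oplus> g = g" "h \<in> S" "h \<oplus> h = h" using g h unfolding is_idem_of_def by auto
  have "g = g \<otimes> g" using add_idem_mult_idem gh by simp
  also have "\<dots> = g \<otimes> a" using g gh unfolding is_idem_of_def by simp
  also have "\<dots> = g \<otimes> h" using h gh unfolding is_idem_of_def by simp
  also have "\<dots> = a \<otimes> h" using g gh unfolding is_idem_of_def by simp
  also have "\<dots> = h \<otimes> h" using h gh unfolding is_idem_of_def by simp
  finally show ?thesis using add_idem_mult_idem gh by simp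
qed

lemma is_idem_of_idem_of:
  assumes "a \<in> S" shows "is_idem_of a (idem_of a)"
proof -
  obtain g where "is_idem_of a g" using is_idem_of_exists[OF assms] by blast
  then show ?thesis unfolding idem_of_def by (metis is_idem_of_unique theI)
qed

lemma idem_of_eq: "\<lbrakk>a \<in> S; is_idem_of a g\<rbrakk> \<Longrightarrow> idem_of a = g"
  using is_idem_of_idem_of is_idem_of_unique by blast

lemma idem_of_closed [simp]: "a \<in> S \<Longrightarrow> idem_of a \<in> S"
  and idem_of_add_idem [simp]: "a \<in> S \<Longrightarrow> idem_of a \<oplus> idem_of a = idem_of a"
  and mult_idem_of: "\<lbrakk>a \<in> S; s \<in> S; s \<oplus> s = s\<rbrakk> \<Longrightarrow> s \<otimes> a = s \<otimes> idem_of a"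
  and idem_of_mult: "\<lbrakk>a \<in> S; s \<in> S; s \<oplus> s = s\<rbrakk> \<Longrightarrow> a \<otimes> s = idem_of a \<otimes> s"
  using is_idem_of_idem_of[of a] unfolding is_idem_of_def by auto

lemma idem_of_factors:
  assumes "a \<in> S" shows "\<exists>t\<in>S. idem_of a = a \<oplus> t" "\<exists>t\<in>S. idem_of a = t \<oplus> a"
proof -
  obtain g where "is_idem_of a g" "\<exists>t\<in>S. g = a \<oplus> t" "\<exists>t\<in>S. g = t \<oplus> a"
    using is_idem_of_exists[OF assms] .
  then show "\<exists>t\<in>S. idem_of a = a \<oplus> t" "\<exists>t\<in>S. idem_of a = t \<oplus> a"
    using idem_of_eq[OF assms] by auto
qed

lemma idem_of_idem: "\<lbrakk>e \<in> S; e \<oplus> e = e\<rbrakk> \<Longrightarrow> idem_of e = e"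
  by (rule idem_of_eq) (auto simp: is_idem_of_def)

lemma idem_of_add: assumes ab: "a \<in> S" "b \<in> S" shows "idem_of (a \<oplus> b) = idem_of a \<oplus> idem_of b"
proof (rule idem_of_eq)
  have "s \<otimes> (a \<oplus> b) = s \<otimes> (idem_of a \<oplus> idem_of b) \<and> (a \<oplus> b) \<otimes> s = (idem_of a \<oplus> idem_of b) \<otimes> s"
    if s: "s \<in> S" "s \<oplus> s = s" for s
    using s ab l_distr r_distr mult_idem_of[OF ab(1) s] mult_idem_of[OF ab(2) s]
      idem_of_mult[OF ab(1) s] idem_of_mult[OF ab(2) s] by simp
  then show "is_idem_of (a \<oplus> b) (idem_of a \<oplus> idem_of b)"
    unfolding is_idem_of_def using ab by (simp add: add_idem_add)
qed (use ab in simp)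

lemma idem_of_mult_hom: assumes ab: "a \<in> S" "b \<in> S" shows "idem_of (a \<otimes> b) = idem_of a \<otimes> idem_of b"
proof (rule idem_of_eq)
  have "s \<otimes> (a \<otimes> b) = s \<otimes> (idem_of a \<otimes> idem_of b) \<and> a \<otimes> b \<otimes> s = idem_of a \<otimes> idem_of b \<otimes> s"
    if s: "s \<in> S" "s \<oplus> s = s" for s
  proof
    have "s \<otimes> (a \<otimes> b) = s \<otimes> idem_of a \<otimes> b" using s ab by (simp add: m_assoc[symmetric] mult_idem_of[of a])
    also have "\<dots> = s \<otimes> idem_of a \<otimes> idem_of b"
      using s ab by (intro mult_idem_of) (simp_all add: add_idem_mult_right)
    finally show "s \<otimes> (a \<otimes> b) = s \<otimes> (idem_of a \<otimes> idem_of b)" using s ab by (simp add: m_assoc)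
    have "a \<otimes> b \<otimes> s = a \<otimes> (idem_of b \<otimes> s)" using s ab by (simp add: m_assoc idem_of_mult[of b])
    also have "\<dots> = idem_of a \<otimes> (idem_of b \<otimes> s)"
      using s ab by (intro idem_of_mult) (simp_all add: add_idem_mult_left)
    finally show "a \<otimes> b \<otimes> s = idem_of a \<otimes> idem_of b \<otimes> s" using s ab by (simp add: m_assoc)
  qed
  then show "is_idem_of (a \<otimes> b) (idem_of a \<otimes> idem_of b)"
    unfolding is_idem_of_def using ab by (simp add: add_idem_mult_left)
qed (use ab in simp)

lemma idem_of_nsum: "a \<in> S \<Longrightarrow> idem_of (nsum p n a) = idem_of a"
  by (induction n) (auto simp: nsum_Suc idem_of_add)

lemma idem_of_mult_self: "a \<in> S \<Longrightarrow> idem_of a \<otimes> a = idem_of a"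
  and mult_idem_of_self: "a \<in> S \<Longrightarrow> a \<otimes> idem_of a = idem_of a"
  using mult_idem_of[of a "idem_of a"] idem_of_mult[of a "idem_of a"] add_idem_mult_idem[of "idem_of a"]
  by simp_all

lemma idem_of_add_regular:
  assumes a: "a \<in> S" and x: "x \<in> S" "a \<oplus> x \<oplus> a = a"
  shows "idem_of a \<oplus> a = a"
proof -
  define g where "g = idem_of a"
  have g: "g \<in> S" "g \<oplus> g = g" using a g_def by auto
  have "a \<oplus> x = (a \<oplus> x) \<otimes> (a \<oplus> x)"
    using add_idem_mult_idem add_inverse_add_idem(1)[OF a x] a x(1) by simp
  also have "\<dots> = g \<otimes> (a \<oplus> x) \<oplus> x \<otimes> (a \<oplus> x)"
    using a x(1) add_inverse_add_idem(1)[OF a x] idem_of_mult[of a "a \<oplus> x"] g_def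
    by (simp add: r_distr)
  also have "\<dots> = g \<oplus> (g \<otimes> x \<oplus> x \<otimes> (a \<oplus> x))"
    using a x(1) g_def by (simp add: l_distr a_assoc idem_of_mult_self)
  finally have "g \<oplus> (a \<oplus> x) = a \<oplus> x" using g a x(1) by (metis add_idem_absorb a_closed m_closed)
  then have "g \<oplus> (a \<oplus> x \<oplus> a) = a \<oplus> x \<oplus> a" using g(1) a x(1) by (simp add: a_assoc[symmetric])
  then show ?thesis using x(2) g_def by simp
qed

lemma add_regular_add_idem_of:
  assumes a: "a \<in> S" and x: "x \<in> S" "a \<oplus> x \<oplus> a = a"
  shows "a \<oplus> idem_of a = a"
proof -
  define g where "g = idem_of a"
  have g: "g \<in> S" "g \<oplus> g = g" using a g_def by auto
  have "x \<oplus> a = (x \<oplus> a) \<otimes> (x \<oplus> a)"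
    using add_idem_mult_idem add_inverse_add_idem(2)[OF a x] a x(1) by simp
  also have "\<dots> = (x \<oplus> a) \<otimes> x \<oplus> (x \<oplus> a) \<otimes> g"
    using a x(1) add_inverse_add_idem(2)[OF a x] mult_idem_of[of a "x \<oplus> a"] g_def
    by (simp add: l_distr)
  also have "\<dots> = (x \<oplus> a) \<otimes> x \<oplus> x \<otimes> g \<oplus> g"
    using a x(1) g_def by (simp add: r_distr a_assoc mult_idem_of_self)
  finally have "x \<oplus> a \<oplus> g = x \<oplus> a" using g a x(1) by (metis a_assoc a_closed m_closed)
  then have "a \<oplus> x \<oplus> a \<oplus> g = a \<oplus> x \<oplus> a" using g(1) a x(1) by (simp add: a_assoc)
  then show ?thesis using x(2) g_def by simp
qed

lemma add_regular_iff_idem_of: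
  assumes a: "a \<in> S"
  shows "add_regular S p a \<longleftrightarrow> a \<oplus> idem_of a = a \<and> idem_of a \<oplus> a = a"
proof
  assume "add_regular S p a"
  then show "a \<oplus> idem_of a = a \<and> idem_of a \<oplus> a = a"
    using a add_regular_add_idem_of idem_of_add_regular by (auto simp: add_regular_iff)
next
  assume "a \<oplus> idem_of a = a \<and> idem_of a \<oplus> a = a"
  moreover obtain t where "t \<in> S" "idem_of a = a \<oplus> t" using idem_of_factors(1)[OF a] by blast
  ultimately show "add_regular S p a" unfolding add_regular_iff by metis
qed

lemma idem_of_add_inverse:
  assumes "a \<in> S" "x \<in> S" "a \<oplus> x \<oplus> a = a"
  shows "idem_of a \<oplus> idem_of x \<oplus> idem_of a = idem_of a"
  using assms(1,2) idem_of_add[of "a \<oplus> x" a] idem_of_add[of a x] by (simp add: assms(3))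

lemma add_regular_inverse:
  assumes a: "a \<in> S" "add_regular S p a"
  obtains y where "y \<in> S" "a \<oplus> y \<oplus> a = a" "a \<oplus> y = y \<oplus> a" "a \<oplus> y = idem_of a"
    "idem_of y = idem_of a" "add_regular S p y"
proof -
  define g where "g = idem_of a"
  obtain x where x: "x \<in> S" "a \<oplus> x \<oplus> a = a" using a unfolding add_regular_iff by blast
  obtain t where t: "t \<in> S" "g = a \<oplus> t" using idem_of_factors(1)[OF a(1)] g_def by blast
  obtain t' where t': "t' \<in> S" "g = t' \<oplus> a" using idem_of_factors(2)[OF a(1)] g_def by blast
  have g: "g \<in> S" "g \<oplus> g = g" using a g_def by auto
  have ag: "a \<oplus> g = a" "g \<oplus> a = a" using a add_regular_iff_idem_of g_def by auto
  define y where "y = g \<oplus> x \<oplus> g"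
  have y: "y \<in> S" using g x y_def by simp
  have "a \<oplus> y = (a \<oplus> g) \<oplus> x \<oplus> (a \<oplus> t)" using a x g t unfolding y_def by (simp add: a_assoc)
  also have "\<dots> = (a \<oplus> x \<oplus> a) \<oplus> t" using a(1) x(1) t(1) ag by (simp add: a_assoc)
  finally have ay: "a \<oplus> y = g" using x(2) t(2) by simp
  have "y \<oplus> a = (t' \<oplus> a) \<oplus> x \<oplus> (g \<oplus> a)" using a x g t' unfolding y_def by (simp add: a_assoc)
  also have "\<dots> = t' \<oplus> (a \<oplus> x \<oplus> a)" using a(1) x(1) t'(1) ag by (simp add: a_assoc)
  finally have ya: "y \<oplus> a = g" using x(2) t'(2) by simp
  have "idem_of a \<oplus> idem_of x \<oplus> idem_of a = idem_of a"
    using idem_of_add_inverse a(1) x by blast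
  then have zy: "idem_of y = g" unfolding y_def g_def using a x by (simp add: idem_of_add idem_of_idem)
  have "y \<oplus> g = y" "g \<oplus> y = y" unfolding y_def using g x by (simp_all add: a_assoc add_idem_absorb)
  then have "add_regular S p y" using y zy add_regular_iff_idem_of by simp
  moreover have "a \<oplus> y \<oplus> a = a" using ay ag by simp
  ultimately show ?thesis using that y ay ya zy g_def by simp
qed

lemma add_idem_add_regular:
  assumes g: "g \<in> S" "g \<oplus> g = g" and x: "x \<in> S" and D: "g \<oplus> idem_of x \<oplus> g = g"
  shows "add_regular S p (g \<oplus> x)" "add_regular S p (x \<oplus> g)"
proof -
  obtain s where s: "s \<in> S" "idem_of x = x \<oplus> s" using idem_of_factors(1)[OF x] by blast
  obtain s' where s': "s' \<in> S" "idem_of x = s' \<oplus> x" using idem_of_factors(2)[OF x] by blast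
  have "g \<oplus> x \<oplus> (s \<oplus> g) \<oplus> (g \<oplus> x) = (g \<oplus> (x \<oplus> s) \<oplus> g) \<oplus> x"
    using g x s(1) by (simp add: a_assoc add_idem_absorb)
  then have "g \<oplus> x \<oplus> (s \<oplus> g) \<oplus> (g \<oplus> x) = g \<oplus> x" using D s(2) by simp
  then show "add_regular S p (g \<oplus> x)" unfolding add_regular_iff using g(1) s(1) a_closed by blast
  have "x \<oplus> g \<oplus> (g \<oplus> s') \<oplus> (x \<oplus> g) = x \<oplus> (g \<oplus> (s' \<oplus> x) \<oplus> g)"
    using g x s'(1) by (simp add: a_assoc add_idem_absorb)
  then have "x \<oplus> g \<oplus> (g \<oplus> s') \<oplus> (x \<oplus> g) = x \<oplus> g" using D s'(2) by simp
  then show "add_regular S p (x \<oplus> g)" unfolding add_regular_iff using g(1) s'(1) a_closed by blast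
qed

lemma add_idem_add_twice:
  assumes g: "g \<in> S" "g \<oplus> g = g" and x: "x \<in> S" and D: "g \<oplus> idem_of x \<oplus> g = g"
  shows "g \<oplus> x \<oplus> x \<oplus> g = g \<oplus> x \<oplus> g \<oplus> x \<oplus> g"
proof -
  define z where "z = idem_of x"
  have z: "z \<in> S" "z \<oplus> z = z" using x z_def by auto
  have "g \<oplus> x \<oplus> idem_of (g \<oplus> x) = g \<oplus> x" "idem_of (x \<oplus> g) \<oplus> (x \<oplus> g) = x \<oplus> g"
    using add_idem_add_regular[OF assms] g x add_regular_iff_idem_of by simp_all
  then have A: "g \<oplus> x \<oplus> (g \<oplus> z) = g \<oplus> x" and B: "z \<oplus> g \<oplus> (x \<oplus> g) = x \<oplus> g"
    using g x z_def by (simp_all add: idem_of_add idem_of_idem)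
  have "g \<oplus> x \<oplus> z = (g \<oplus> x \<oplus> (g \<oplus> z)) \<oplus> z" using A by simp
  also have "\<dots> = g \<oplus> x \<oplus> (g \<oplus> z)" using g x z by (simp add: a_assoc)
  finally have gxz: "g \<oplus> x \<oplus> z = g \<oplus> x" using A by simp
  have "g \<oplus> x \<oplus> x \<oplus> g = g \<oplus> x \<oplus> (z \<oplus> g \<oplus> (x \<oplus> g))" using B g x by (simp add: a_assoc)
  also have "\<dots> = (g \<oplus> x \<oplus> z) \<oplus> g \<oplus> x \<oplus> g" using g x z by (simp add: a_assoc)
  finally show ?thesis using gxz by simp
qed

lemma add_inverse_double:
  assumes a: "a \<in> S" and x: "x \<in> S" "a \<oplus> x \<oplus> a = a"
  shows "a \<oplus> (x \<oplus> x) \<oplus> (a \<oplus> a) = a"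
proof -
  define g where "g = idem_of a"
  have g: "g \<in> S" "g \<oplus> g = g" using a g_def by auto
  have ag: "a \<oplus> g = a" "g \<oplus> a = a"
    using a x add_regular_iff_idem_of g_def unfolding add_regular_iff by blast+
  have D: "g \<oplus> idem_of x \<oplus> g = g" using idem_of_add_inverse[OF a x] g_def by simp
  obtain t where t: "t \<in> S" "g = a \<oplus> t" using idem_of_factors(1)[OF a] g_def by blast
  obtain t' where t': "t' \<in> S" "g = t' \<oplus> a" using idem_of_factors(2)[OF a] g_def by blast
  have "a \<oplus> x \<oplus> g = (a \<oplus> x \<oplus> a) \<oplus> t" using t a x(1) by (simp add: a_assoc)
  then have axg: "a \<oplus> x \<oplus> g = g" using t(2) x(2) by simp
  have "g \<oplus> x \<oplus> a = t' \<oplus> (a \<oplus> x \<oplus> a)" using t' a x(1) by (simp add: a_assoc)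
  then have gxa: "g \<oplus> x \<oplus> a = g" using t'(2) x(2) by simp
  have ag': "a \<oplus> (g \<oplus> y) = a \<oplus> y" "g \<oplus> (a \<oplus> y) = a \<oplus> y" if "y \<in> S" for y
    using ag a g that by (simp_all add: a_assoc[symmetric])
  have "a \<oplus> (x \<oplus> x) \<oplus> (a \<oplus> a) = a \<oplus> (g \<oplus> x \<oplus> x \<oplus> g) \<oplus> a \<oplus> a"
    using a x(1) g ag' by (simp add: a_assoc)
  also have "\<dots> = a \<oplus> (g \<oplus> x \<oplus> g \<oplus> x \<oplus> g) \<oplus> a \<oplus> a"
    using add_idem_add_twice[OF g x(1) D] by simp
  also have "\<dots> = (a \<oplus> x \<oplus> g) \<oplus> x \<oplus> a \<oplus> a"
    using a x(1) g ag' by (simp add: a_assoc)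
  also have "\<dots> = a" using axg gxa ag by simp
  finally show ?thesis .
qed

lemma add_inverse_add:
  assumes a: "a \<in> S" "x \<in> S" "a \<oplus> x \<oplus> a = a" and b: "b \<in> S" "y \<in> S" "b \<oplus> y \<oplus> b = b"
  shows "(a \<oplus> b) \<oplus> (y \<oplus> x) \<oplus> (a \<oplus> b) = a \<oplus> b"
proof -
  define w where "w = x \<oplus> a \<oplus> (b \<oplus> y)"
  have ww: "w \<oplus> w = w"
    unfolding w_def using a b add_idem_add add_inverse_add_idem[OF a] add_inverse_add_idem[OF b] by simp
  have ra: "a \<oplus> (x \<oplus> (a \<oplus> z)) = a \<oplus> z" if "z \<in> S" for z
    using a that by (simp add: a_assoc[symmetric])
  have rb: "b \<oplus> (y \<oplus> b) = b" using b by (simp add: a_assoc)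
  have "(a \<oplus> b) \<oplus> (y \<oplus> x) \<oplus> (a \<oplus> b) = a \<oplus> (w \<oplus> w) \<oplus> b"
    unfolding w_def using a(1,2) b(1,2) ra rb by (simp add: a_assoc)
  also have "\<dots> = a \<oplus> b" unfolding ww unfolding w_def using a(1,2) b(1,2) ra rb by (simp add: a_assoc)
  finally show ?thesis .
qed

lemma add_regular_add_closed:
  assumes "a \<in> S" "add_regular S p a" "b \<in> S" "add_regular S p b"
  shows "add_regular S p (a \<oplus> b)"
  using assms add_inverse_add unfolding add_regular_iff by (metis a_closed)

lemma Hstar_square:
  assumes b: "b \<in> S" shows "Hstar S p (b \<otimes> b) b"
proof -
  have aqr: "add_quasi_regular S p" using qcr quasi_completely_regular_add_quasi_regular by blast
  define u where "u = nsum p (mindex S p b) b"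
  define v where "v = nsum p (mindex S p (b \<otimes> b)) (b \<otimes> b)"
  have u: "u \<in> S" "add_regular S p u" using mindex_add_regular[OF aqr b] b u_def by auto
  have v: "v \<in> S" "add_regular S p v" using mindex_add_regular[OF aqr, of "b \<otimes> b"] b v_def by auto
  have "idem_of u = idem_of b" "idem_of v = idem_of b"
    using b unfolding u_def v_def by (simp_all add: idem_of_nsum idem_of_mult_hom add_idem_mult_idem)
  then have "greenL S p v u \<and> greenR S p v u"
    using greenL_greenR_common_unit[OF v(1) u(1)] add_regular_iff_idem_of u v
      idem_of_factors[OF u(1)] idem_of_factors[OF v(1)] by metis
  then show ?thesis unfolding Hstar_def Lstar_def Rstar_def u_def v_def by simp
qed

section \<open>The b-lattice decomposition\<close>

lemma add_regular_add_bandD: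
  assumes b: "b \<in> S" "add_regular S p b" and x: "x \<in> S"
    and "add_band.bandD (idem_of b) (idem_of x)"
  shows "add_regular S p (b \<oplus> x)" "add_regular S p (x \<oplus> b)"
proof -
  have D: "idem_of b \<oplus> idem_of x \<oplus> idem_of b = idem_of b"
    using assms(4) unfolding add_band.bandD_def by simp
  define g where "g = idem_of b"
  have g: "g \<in> S" "g \<oplus> g = g" using b g_def by auto
  have bg: "b \<oplus> g = b" "g \<oplus> b = b" using b add_regular_iff_idem_of g_def by auto
  have "b \<oplus> x = b \<oplus> (g \<oplus> x)" "x \<oplus> b = (x \<oplus> g) \<oplus> b"
    using bg b(1) g(1) x by (simp_all add: a_assoc[symmetric] a_assoc)
  then show "add_regular S p (b \<oplus> x)" "add_regular S p (x \<oplus> b)"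
    using add_regular_add_closed add_idem_add_regular[OF g x] D b g x g_def by simp_all
qed

lemma idem_of_mem_add_idem [simp]: "a \<in> S \<Longrightarrow> idem_of a \<in> add_idem S p"
  by (simp add: mem_add_idem)

lemma bandD_mult_right:
  assumes "e \<in> S" "f \<in> S" "c \<in> S" "add_band.bandD e f"
  shows "add_band.bandD (e \<otimes> c) (f \<otimes> c)"
  using assms r_distr[of c "e \<oplus> f" e] r_distr[of c e f] r_distr[of c "f \<oplus> e" f] r_distr[of c f e]
  unfolding add_band.bandD_def by simp

lemma bandD_mult_left:
  assumes "e \<in> S" "f \<in> S" "c \<in> S" "add_band.bandD e f"
  shows "add_band.bandD (c \<otimes> e) (c \<otimes> f)"
  using assms l_distr[of c "e \<oplus> f" e] l_distr[of c e f] l_distr[of c "f \<oplus> e" f] l_distr[of c f e]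
  unfolding add_band.bandD_def by simp

lemma bandD_mult:
  assumes e: "e \<in> add_idem S p" and f: "f \<in> add_idem S p" and g: "g \<in> add_idem S p"
    and "add_band.bandD e g" "add_band.bandD f g"
  shows "add_band.bandD (e \<otimes> f) g"
proof -
  have S: "e \<in> S" "f \<in> S" "g \<in> S" using e f g by (simp_all add: mem_add_idem)
  have "add_band.bandD (e \<otimes> f) (g \<otimes> f)" using bandD_mult_right S assms(4) by blast
  moreover have "add_band.bandD (g \<otimes> f) (g \<otimes> g)"
    using bandD_mult_left S assms(5) add_band.bandD_sym by blast
  moreover have "e \<otimes> f \<in> add_idem S p" "g \<otimes> f \<in> add_idem S p" "g \<otimes> g \<in> add_idem S p"
    using e f g by (simp_all add: mem_add_idem add_idem_mult_left)
  ultimately have "add_band.bandD (e \<otimes> f) (g \<otimes> g)" using add_band.bandD_trans by blast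
  then show ?thesis using g add_idem_mult_idem by (simp add: mem_add_idem)
qed

definition idem_D :: "'a rel" where
  "idem_D = {(a, b). a \<in> S \<and> b \<in> S \<and> add_band.bandD (idem_of a) (idem_of b)}"

lemma idem_D_class_iff:
  "a \<in> S \<Longrightarrow> b \<in> idem_D `` {a} \<longleftrightarrow> b \<in> S \<and> add_band.bandD (idem_of a) (idem_of b)"
  unfolding idem_D_def by auto

lemma idem_D_equiv: "equiv S idem_D"
proof (rule equivI)
  show "refl_on S idem_D" unfolding refl_on_def idem_D_def by (auto intro: add_band.bandD_refl)
  show "sym idem_D" unfolding sym_def idem_D_def by (auto intro: add_band.bandD_sym)
  show "trans idem_D" unfolding trans_def idem_D_def
    by (blast intro: add_band.bandD_trans idem_of_mem_add_idem)
  show "idem_D \<subseteq> S \<times> S" unfolding idem_D_def by auto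
qed

lemma idem_D_congruence: "sr_congruence S p m idem_D"
  unfolding sr_congruence_def
proof (intro conjI allI impI idem_D_equiv)
  fix a b c assume "(a, b) \<in> idem_D \<and> c \<in> S"
  then have "a \<in> S" "b \<in> S" "c \<in> S" "add_band.bandD (idem_of a) (idem_of b)"
    unfolding idem_D_def by auto
  then show "(a \<oplus> c, b \<oplus> c) \<in> idem_D" "(c \<oplus> a, c \<oplus> b) \<in> idem_D"
    "(a \<otimes> c, b \<otimes> c) \<in> idem_D" "(c \<otimes> a, c \<otimes> b) \<in> idem_D"
    unfolding idem_D_def
    by (simp_all add: idem_of_add idem_of_mult_hom add_band.bandD_add_right add_band.bandD_add_left
        bandD_mult_right bandD_mult_left)
qed

lemma idem_D_blattice: "blattice_quotient S p m idem_D"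
  unfolding blattice_quotient_def idem_D_def
  by (simp add: idem_of_add idem_of_mult_hom add_idem_mult_idem add_band.bandD_refl
      add_band.bandD_add_commute)

lemma idem_D_class_bandD:
  assumes "a \<in> S" "b \<in> idem_D `` {a}" "c \<in> idem_D `` {a}"
  shows "add_band.bandD (idem_of b) (idem_of c)"
  using assms idem_D_class_iff add_band.bandD_trans add_band.bandD_sym by (metis idem_of_mem_add_idem)

lemma idem_D_class_add:
  assumes a: "a \<in> S" and "b \<in> idem_D `` {a}" "c \<in> idem_D `` {a}"
  shows "b \<oplus> c \<in> idem_D `` {a}"
  using assms idem_D_class_iff[OF a] add_band.bandD_add[of "idem_of b" "idem_of c" "idem_of a"]
  by (simp add: idem_of_add add_band.bandD_sym)

lemma idem_D_class_mult:
  assumes a: "a \<in> S" and "b \<in> idem_D `` {a}" "c \<in> idem_D `` {a}"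
  shows "b \<otimes> c \<in> idem_D `` {a}"
  using assms idem_D_class_iff[OF a] bandD_mult[of "idem_of b" "idem_of c" "idem_of a"]
  by (simp add: idem_of_mult_hom add_band.bandD_sym)

lemma idem_D_class_semiring:
  assumes a: "a \<in> S" shows "sr_semiring (idem_D `` {a}) p m"
proof -
  have "idem_D `` {a} \<subseteq> S" unfolding idem_D_def by auto
  then show ?thesis
    by (rule sr_semiring_subset) (use idem_D_class_add[OF a] idem_D_class_mult[OF a] in blast)
qed

definition reg_core :: "'a \<Rightarrow> 'a set" where
  "reg_core a = {b \<in> idem_D `` {a}. add_regular S p b}"

lemma reg_core_iff:
  "a \<in> S \<Longrightarrow> b \<in> reg_core a \<longleftrightarrow>
     b \<in> S \<and> add_band.bandD (idem_of a) (idem_of b) \<and> add_regular S p b"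
  unfolding reg_core_def using idem_D_class_iff by auto

lemma reg_core_subset: "reg_core a \<subseteq> idem_D `` {a}"
  unfolding reg_core_def by auto

lemma reg_core_bi_ideal:
  assumes a: "a \<in> S" and b: "b \<in> reg_core a" and x: "x \<in> idem_D `` {a}"
  shows "b \<oplus> x \<in> reg_core a" "x \<oplus> b \<in> reg_core a" "b \<otimes> x \<in> reg_core a" "x \<otimes> b \<in> reg_core a"
proof -
  have bC: "b \<in> idem_D `` {a}" and reg: "add_regular S p b" using b unfolding reg_core_def by auto
  have S: "b \<in> S" "x \<in> S" using bC x idem_D_class_iff[OF a] by auto
  show "b \<oplus> x \<in> reg_core a" "x \<oplus> b \<in> reg_core a" "b \<otimes> x \<in> reg_core a" "x \<otimes> b \<in> reg_core a"
    unfolding reg_core_def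
    using add_regular_add_bandD[OF S(1) reg S(2) idem_D_class_bandD[OF a bC x]]
      add_regular_mult[OF S(1) reg S(2)]
      idem_D_class_add[OF a] idem_D_class_mult[OF a] bC x by simp_all
qed

lemma reg_core_closed:
  assumes "a \<in> S" "b \<in> reg_core a" "c \<in> reg_core a"
  shows "b \<oplus> c \<in> reg_core a \<and> b \<otimes> c \<in> reg_core a"
  using reg_core_bi_ideal(1,3)[OF assms(1,2)] assms(3) reg_core_subset by blast

lemma reg_core_inverse:
  assumes a: "a \<in> S" and b: "b \<in> reg_core a"
  obtains y where "y \<in> reg_core a" "b \<oplus> y \<oplus> b = b" "b \<oplus> y = y \<oplus> b" "b \<oplus> y = idem_of b"
proof -
  have b': "b \<in> S" "add_band.bandD (idem_of a) (idem_of b)" "add_regular S p b"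
    using b reg_core_iff[OF a] by auto
  obtain y where y: "y \<in> S" "b \<oplus> y \<oplus> b = b" "b \<oplus> y = y \<oplus> b" "b \<oplus> y = idem_of b"
    "idem_of y = idem_of b" "add_regular S p y"
    using add_regular_inverse[OF b'(1,3)] by blast
  then have "y \<in> reg_core a" using b' reg_core_iff[OF a] by simp
  then show ?thesis using that y by blast
qed

lemma idem_of_reg_core:
  assumes a: "a \<in> S" and b: "b \<in> reg_core a" shows "idem_of b \<in> reg_core a"
proof -
  have bS: "b \<in> S" "add_band.bandD (idem_of a) (idem_of b)" using b reg_core_iff[OF a] by auto
  then have "idem_of b \<oplus> idem_of b \<oplus> idem_of b = idem_of b" by simp
  then have "add_regular S p (idem_of b)" unfolding add_regular_iff using bS(1) idem_of_closed by blast
  with bS show ?thesis using reg_core_iff[OF a] by (simp add: idem_of_idem)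
qed

lemma reg_core_principal_ideal:
  assumes a: "a \<in> S" and b: "b \<in> reg_core a"
  shows "ideal_principal (reg_core a) p b = reg_core a"
proof
  show "ideal_principal (reg_core a) p b \<subseteq> reg_core a"
    unfolding ideal_principal_def using b reg_core_closed[OF a] by blast
  show "reg_core a \<subseteq> ideal_principal (reg_core a) p b"
  proof
    fix d assume d: "d \<in> reg_core a"
    obtain y where y: "y \<in> reg_core a" "b \<oplus> y = idem_of b" using reg_core_inverse[OF a b] by metis
    have S: "b \<in> S" "d \<in> S" "y \<in> S" using b d y(1) reg_core_iff[OF a] by auto
    have dd: "idem_of d \<oplus> d = d" using d S(2) reg_core_iff[OF a] add_regular_iff_idem_of by auto
    have D: "idem_of d \<oplus> idem_of b \<oplus> idem_of d = idem_of d"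
      using idem_D_class_bandD[OF a] d b reg_core_subset unfolding add_band.bandD_def by blast
    have "idem_of d \<oplus> b \<oplus> (y \<oplus> d) = idem_of d \<oplus> (b \<oplus> y) \<oplus> d" using S by (simp add: a_assoc)
    also have "\<dots> = idem_of d \<oplus> idem_of b \<oplus> (idem_of d \<oplus> d)" using y(2) dd by simp
    also have "\<dots> = (idem_of d \<oplus> idem_of b \<oplus> idem_of d) \<oplus> d" using S by (simp add: a_assoc)
    finally have "d = idem_of d \<oplus> b \<oplus> (y \<oplus> d)" using D dd by simp
    moreover have "idem_of d \<in> reg_core a" "y \<oplus> d \<in> reg_core a"
      using idem_of_reg_core[OF a d] reg_core_closed[OF a y(1) d] by auto
    ultimately show "d \<in> ideal_principal (reg_core a) p b" unfolding ideal_principal_def by blast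
  qed
qed

lemma reg_core_semiring:
  assumes a: "a \<in> S" shows "sr_semiring (reg_core a) p m"
proof -
  have "reg_core a \<subseteq> S" using reg_core_iff[OF a] by auto
  then show ?thesis by (rule sr_semiring_subset) (rule reg_core_closed[OF a])
qed

lemma reg_core_rect_skew_ring:
  assumes a: "a \<in> S" shows "rect_skew_ring (reg_core a) p m"
  unfolding rect_skew_ring_def completely_simple_def
proof (intro conjI ballI)
  have sub: "reg_core a \<subseteq> S" using reg_core_iff[OF a] by auto
  show "sr_semiring (reg_core a) p m" using reg_core_semiring[OF a] .
  show "completely_regular (reg_core a) p m b" if b: "b \<in> reg_core a" for b
  proof -
    obtain y where y: "y \<in> reg_core a" "b \<oplus> y \<oplus> b = b" "b \<oplus> y = y \<oplus> b" "b \<oplus> y = idem_of b"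
      using reg_core_inverse[OF a b] by metis
    have "b \<otimes> (b \<oplus> y) = b \<oplus> y" using b sub y(4) mult_idem_of_self by auto
    then show ?thesis unfolding completely_regular_def using y by (intro bexI[of _ y]) auto
  qed
  show "greenJ (reg_core a) p b c" if "b \<in> reg_core a" "c \<in> reg_core a" for b c
    unfolding greenJ_def using that reg_core_principal_ideal[OF a] by simp
  show "subsemigroup (add_idem (reg_core a) p) p"
    unfolding subsemigroup_def add_idem_def
  proof (intro ballI)
    fix e f assume e: "e \<in> {e \<in> reg_core a. e \<oplus> e = e}" and f: "f \<in> {e \<in> reg_core a. e \<oplus> e = e}"
    then have "e \<in> S" "f \<in> S" using sub by auto
    then show "e \<oplus> f \<in> {e \<in> reg_core a. e \<oplus> e = e}" using e f reg_core_closed[OF a] add_idem_add by simp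
  qed
qed

lemma reg_core_nil_extension:
  assumes a: "a \<in> S" shows "nil_extension (idem_D `` {a}) (reg_core a) p m"
  unfolding nil_extension_def
proof (intro conjI ballI)
  show "sr_semiring (reg_core a) p m" using reg_core_semiring[OF a] .
  show "bi_ideal (idem_D `` {a}) (reg_core a) p m"
    unfolding bi_ideal_def by (simp add: reg_core_subset reg_core_bi_ideal[OF a])
  fix b assume "b \<in> idem_D `` {a}"
  then have b: "b \<in> S" "add_band.bandD (idem_of a) (idem_of b)" using idem_D_class_iff[OF a] by auto
  obtain n where n: "n > 0" "completely_regular S p m (nsum p n b)"
    using qcr b unfolding quasi_completely_regular_def by blast
  then have "add_regular S p (nsum p n b)"
    unfolding completely_regular_def add_regular_def by blast
  then have "nsum p n b \<in> reg_core a" using b reg_core_iff[OF a] by (simp add: idem_of_nsum)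
  then show "\<exists>n>0. nsum p n b \<in> reg_core a" using n(1) by blast
qed

lemma blattice_of_nil_ext_rect_skew_rings: "blattice_of_nil_ext_rsr S p m"
proof -
  have "nil_ext_rect_skew_ring (idem_D `` {a}) p m" if a: "a \<in> S" for a
    unfolding nil_ext_rect_skew_ring_def
    using idem_D_class_semiring[OF a] reg_core_rect_skew_ring[OF a] reg_core_nil_extension[OF a] by blast
  then show ?thesis
    unfolding blattice_of_nil_ext_rsr_def using idem_D_congruence idem_D_blattice by blast
qed

end

section \<open>The converse implications\<close>

context carrier_semiring
begin

lemma square_greenL_greenR:
  assumes H: "\<forall>b\<in>S. Hstar S p (b \<otimes> b) b" and u: "u \<in> S" "add_regular S p u"
  shows "greenL S p (u \<otimes> u) u \<and> greenR S p (u \<otimes> u) u"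
proof -
  have "Hstar S p (u \<otimes> u) u" using H u(1) by simp
  then show ?thesis unfolding Hstar_def Lstar_def Rstar_def
    using mindex_eq_1[OF u(2)] mindex_eq_1[OF add_regular_mult(1)[OF u u(1)]] by simp
qed

lemma add_regular_mult_unit:
  assumes H: "\<forall>b\<in>S. Hstar S p (b \<otimes> b) b" and u: "u \<in> S" "add_regular S p u"
    and y: "y \<in> S" "u \<oplus> y = y \<oplus> u" "u \<oplus> y \<oplus> u = u"
  shows "u \<otimes> (u \<oplus> y) = u \<oplus> y"
proof -
  define h where "h = u \<oplus> y"
  define v where "v = u \<otimes> u"
  define k where "k = u \<otimes> h"
  have S: "h \<in> S" "v \<in> S" "k \<in> S" "u \<otimes> y \<in> S" using u(1) y(1) h_def v_def k_def by simp_all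
  have hu: "h \<oplus> u = u" "h = y \<oplus> u" using y h_def by simp_all
  have "v = u \<otimes> (u \<oplus> y \<oplus> u)" using y(3) v_def by simp
  then have v: "v \<oplus> u \<otimes> y \<oplus> v = v" using u(1) y(1) v_def by (simp add: l_distr)
  have k1: "k = v \<oplus> u \<otimes> y" unfolding k_def v_def h_def using u(1) y(1) by (simp add: l_distr)
  have k2: "k = u \<otimes> y \<oplus> v" unfolding k_def v_def h_def y(2) using u(1) y(1) by (simp add: l_distr)
  have vk: "v \<oplus> k = v" using v S unfolding k2 by (simp add: a_assoc)
  have uk: "u \<oplus> k = u"
  proof (cases "u = v")
    case False
    then obtain z where z: "z \<in> S" "u = z \<oplus> v"
      using square_greenL_greenR[OF H u] v_def unfolding greenL_def by auto
    then have "u \<oplus> k = z \<oplus> (v \<oplus> k)" using S by (simp add: a_assoc)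
    then show ?thesis using vk z(2) by simp
  qed (use vk in simp)
  have hv: "h \<oplus> v = v"
  proof (cases "v = u")
    case False
    then obtain z where z: "z \<in> S" "v = u \<oplus> z"
      using square_greenL_greenR[OF H u] v_def unfolding greenR_def by auto
    then have "h \<oplus> v = (h \<oplus> u) \<oplus> z" using S u(1) by (simp add: a_assoc)
    then show ?thesis using hu(1) z(2) by simp
  qed (use hu in simp)
  have "k = h \<oplus> v \<oplus> u \<otimes> y" using hv k1 by simp
  also have "\<dots> = y \<oplus> (u \<oplus> k)" using S u(1) y(1) k1 hu(2) by (simp add: a_assoc)
  also have "\<dots> = h" using uk hu(2) by simp
  finally show ?thesis using k_def h_def by simp
qed

context
  assumes double_law: "\<And>a y. \<lbrakk>a \<in> S; y \<in> S; a \<oplus> y \<oplus> a = a\<rbrakk> \<Longrightarrow> a \<oplus> (y \<oplus> y) \<oplus> (a \<oplus> a) = a"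
begin

lemma inverse_cube_commute:
  assumes "a \<in> S" "x \<in> S" "a \<oplus> x \<oplus> a = a" "x \<oplus> a \<oplus> x = x"
  shows "a \<oplus> (a \<oplus> x \<oplus> x \<oplus> x \<oplus> a) = (a \<oplus> x \<oplus> x \<oplus> x \<oplus> a) \<oplus> a"
    and "a \<oplus> (a \<oplus> x \<oplus> x \<oplus> x \<oplus> a) \<oplus> a = a"
  using assms by (smt (verit) double_law a_closed a_assoc)+

lemma add_idem_closed_of_Reg_add:
  assumes Reg: "subsemigroup (Reg_add S p) p" shows "subsemigroup (add_idem S p) p"
  unfolding subsemigroup_def
proof (intro ballI)
  fix e f assume "e \<in> add_idem S p" "f \<in> add_idem S p"
  then have ef: "e \<in> S" "e \<oplus> e = e" "f \<in> S" "f \<oplus> f = f" by (simp_all add: mem_add_idem)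
  then have "e \<oplus> e \<oplus> e = e" "f \<oplus> f \<oplus> f = f" by simp_all
  then have "e \<in> Reg_add S p" "f \<in> Reg_add S p" unfolding Reg_add_def add_regular_iff using ef by blast+
  then have "e \<oplus> f \<in> Reg_add S p" using Reg unfolding subsemigroup_def by blast
  then obtain w where w: "w \<in> S" "e \<oplus> f \<oplus> w \<oplus> (e \<oplus> f) = e \<oplus> f"
    unfolding Reg_add_def add_regular_iff by auto
  define z where "z = w \<oplus> (e \<oplus> f) \<oplus> w"
  have z: "z \<in> S" "e \<oplus> f \<oplus> z \<oplus> (e \<oplus> f) = e \<oplus> f" "z \<oplus> (e \<oplus> f) \<oplus> z = z"
    using add_inverse_pair[of "e \<oplus> f" w] w ef z_def by simp_all
  have "(e \<oplus> f) \<oplus> (e \<oplus> f) = e \<oplus> f"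
    using ef z by (smt (verit, best) double_law a_closed a_assoc)
  then show "e \<oplus> f \<in> add_idem S p" using ef by (simp add: mem_add_idem)
qed

lemma add_regular_commuting_inverse:
  assumes u: "u \<in> S" "add_regular S p u"
  obtains y where "y \<in> S" "u \<oplus> y = y \<oplus> u" "u \<oplus> y \<oplus> u = u"
proof -
  obtain x0 where x0: "x0 \<in> S" "u \<oplus> x0 \<oplus> u = u" using u unfolding add_regular_iff by blast
  define x where "x = x0 \<oplus> u \<oplus> x0"
  have x: "x \<in> S" "u \<oplus> x \<oplus> u = u" "x \<oplus> u \<oplus> x = x"
    using add_inverse_pair[OF u(1) x0] u(1) x0(1) x_def by simp_all
  show ?thesis
    using that[of "u \<oplus> x \<oplus> x \<oplus> x \<oplus> u"] inverse_cube_commute[OF u(1) x] u(1) x(1) by simp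
qed

lemma add_regular_completely_regular_of_Hstar:
  assumes H: "\<forall>b\<in>S. Hstar S p (b \<otimes> b) b" and u: "u \<in> S" "add_regular S p u"
  shows "completely_regular S p m u"
proof -
  obtain y where "y \<in> S" "u \<oplus> y = y \<oplus> u" "u \<oplus> y \<oplus> u = u"
    using add_regular_commuting_inverse[OF u] by blast
  then show ?thesis unfolding completely_regular_def
    using add_regular_mult_unit[OF H u] by (intro bexI[of _ y]) auto
qed

lemma quasi_completely_regular_of_Hstar:
  assumes aqr: "add_quasi_regular S p" and H: "\<forall>b\<in>S. Hstar S p (b \<otimes> b) b"
  shows "quasi_completely_regular S p m"
  unfolding quasi_completely_regular_def
proof
  fix a assume "a \<in> S"
  then obtain n where "n > 0" "add_regular S p (nsum p n a)" using aqr unfolding add_quasi_regular_def by blast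
  then show "\<exists>n>0. completely_regular S p m (nsum p n a)"
    using add_regular_completely_regular_of_Hstar[OF H] \<open>a \<in> S\<close> by auto
qed

end

end

lemma quasi_completely_regular_of_blattice:
  assumes "blattice_of_nil_ext_rsr S p m" shows "quasi_completely_regular S p m"
  unfolding quasi_completely_regular_def
proof
  fix a assume a: "a \<in> S"
  obtain \<rho> where \<rho>: "sr_congruence S p m \<rho>" "\<forall>a\<in>S. nil_ext_rect_skew_ring (\<rho> `` {a}) p m"
    using assms unfolding blattice_of_nil_ext_rsr_def by blast
  have "equiv S \<rho>" using \<rho>(1) unfolding sr_congruence_def by blast
  then have aC: "a \<in> \<rho> `` {a}" and CS: "\<rho> `` {a} \<subseteq> S"
    using a unfolding equiv_def refl_on_def by auto
  obtain K where K: "rect_skew_ring K p m" "nil_extension (\<rho> `` {a}) K p m"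
    using \<rho>(2) a unfolding nil_ext_rect_skew_ring_def by blast
  obtain n where n: "n > 0" "nsum p n a \<in> K" using K(2) aC unfolding nil_extension_def by blast
  have "K \<subseteq> S" using K(2) CS unfolding nil_extension_def bi_ideal_def by blast
  moreover have "completely_regular K p m (nsum p n a)"
    using K(1) n(2) unfolding rect_skew_ring_def completely_simple_def by blast
  ultimately have "completely_regular S p m (nsum p n a)" unfolding completely_regular_def by blast
  then show "\<exists>n>0. completely_regular S p m (nsum p n a)" using n(1) by blast
qed

theorem theorem3p6:
  fixes S :: "'a set" and p m :: "'a \<Rightarrow> 'a \<Rightarrow> 'a"
  assumes "sr_semiring S p m"
  shows "((quasi_completely_regular S p m \<and> subsemigroup (add_idem S p) p)
           \<longleftrightarrow>
          (add_quasi_regular S p \<and>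
           (\<forall>b\<in>S. Hstar S p (m b b) b) \<and>
           (\<forall>a\<in>S. \<forall>x\<in>S. a = p (p a x) a \<longrightarrow> a = p (p a (nsum p 2 x)) (nsum p 2 a)) \<and>
           subsemigroup (Reg_add S p) p))
       \<and>
         ((quasi_completely_regular S p m \<and> subsemigroup (add_idem S p) p)
           \<longleftrightarrow>
          (blattice_of_nil_ext_rsr S p m \<and> subsemigroup (add_idem S p) p))"
proof -
  interpret carrier_semiring S p m by unfold_locales (fact assms)
  have i_implies_ii_iii: "add_quasi_regular S p \<and> (\<forall>b\<in>S. Hstar S p (m b b) b) \<and>
      (\<forall>a\<in>S. \<forall>x\<in>S. a = p (p a x) a \<longrightarrow> a = p (p a (nsum p 2 x)) (nsum p 2 a)) \<and>
      subsemigroup (Reg_add S p) p \<and> blattice_of_nil_ext_rsr S p m"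
    if qcr: "quasi_completely_regular S p m" and E: "subsemigroup (add_idem S p) p"
  proof -
    interpret qcr_semiring S p m by unfold_locales (fact qcr E)+
    show ?thesis
      using quasi_completely_regular_add_quasi_regular[OF qcr] Hstar_square add_inverse_double
        add_regular_add_closed blattice_of_nil_ext_rect_skew_rings
      by (auto simp: nsum_2 subsemigroup_def Reg_add_def)
  qed
  have ii_implies_i: "quasi_completely_regular S p m \<and> subsemigroup (add_idem S p) p"
    if aqr: "add_quasi_regular S p" and H: "\<forall>b\<in>S. Hstar S p (m b b) b"
      and double: "\<forall>a\<in>S. \<forall>x\<in>S. a = p (p a x) a \<longrightarrow> a = p (p a (nsum p 2 x)) (nsum p 2 a)"
      and Reg: "subsemigroup (Reg_add S p) p"
  proof -
    have "p (p a (p y y)) (p a a) = a" if "a \<in> S" "y \<in> S" "p (p a y) a = a" for a y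
      using that double by (simp add: nsum_2)
    then show ?thesis
      using quasi_completely_regular_of_Hstar[OF _ aqr H] add_idem_closed_of_Reg_add[OF _ Reg] by blast
  qed
  show ?thesis using i_implies_ii_iii ii_implies_i quasi_completely_regular_of_blattice by blast
qed

end
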